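(* Let $Q=\{\bm{x}\in\mathbb{R}^n: A\bm{x}\le\bm{b},\ B\bm{x}\le\bm{d}\}$ be a polytope, where all entries of the matrix $A$ are non-negative and all entries of the matrix $B$ are non-positive, and circuits of $Q$ are taken with respect to this system. Then every circuit $\bm{c}\in\mathbb{R}^n$ of $Q$ with $\bm{c}\ge\bm{0}$ or $\bm{c}\le\bm{0}$ has exactly one non-zero coordinate.
   Context: Circuits: for a polytope $P=\{\bm{x}: D\bm{x}\le \bm{f}\}$ given by a fixed linear system, a nonzero vector $\bm{g}$ is a circuit of $P$ if $\operatorname{supp}(D\bm{g})$ is inclusion-minimal among the sets $\operatorname{supp}(D\bm{y})$ with $\bm{y}\neq\bm{0}$. Here $D$ is the matrix obtained by stacking $A$ over $B$. *)

theory Defs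
  imports "HOL-Analysis.Analysis"
begin

text \<open>Support of the stacked vector D y, where D is A stacked over B.
  Rows of A are tagged Inl, rows of B are tagged Inr.\<close>
definition stacked_supp ::
  "real^'n^'m1 \<Rightarrow> real^'n^'m2 \<Rightarrow> real^'n \<Rightarrow> ('m1 + 'm2) set" where
  "stacked_supp A B y =
     Inl ` {i. (A *v y) $ i \<noteq> 0} \<union> Inr ` {j. (B *v y) $ j \<noteq> 0}"

definition is_circuit ::
  "real^'n^'m1 \<Rightarrow> real^'n^'m2 \<Rightarrow> real^'n \<Rightarrow> bool" where
  "is_circuit A B g \<longleftrightarrow> g \<noteq> 0 \<and>
     \<not> (\<exists>y. y \<noteq> 0 \<and> stacked_supp A B y \<subset> stacked_supp A B g)"

end

theory Submission
  imports Defs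
begin

text \<open>A nonnegative circuit c dominates, row by row, the sign pattern of every unit vector
  e_k with c_k \<noteq> 0, because the columns of A and of -B are nonnegative; so by minimality
  supp(D e_k) = supp(D c) for each such k. Since the polytope is bounded, D has trivial kernel
  and this common support is nonempty. Two distinct such k, l would then allow a combination of
  e_k and e_l cancelling one row of the support, contradicting minimality.\<close>

definition stacked_entry ::
  "real^'n^'m1 \<Rightarrow> real^'n^'m2 \<Rightarrow> real^'n \<Rightarrow> 'm1 + 'm2 \<Rightarrow> real" where
  "stacked_entry A B y r = (case r of Inl i \<Rightarrow> (A *v y) $ i | Inr j \<Rightarrow> (B *v y) $ j)"

lemma mem_stacked_supp_iff: "r \<in> stacked_supp A B y \<longleftrightarrow> stacked_entry A B y r \<noteq> 0"
  unfolding stacked_supp_def stacked_entry_def by (cases r) auto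

lemma stacked_entry_diff_scale:
  "stacked_entry A B (a *s y - b *s z) r = a * stacked_entry A B y r - b * stacked_entry A B z r"
  unfolding stacked_entry_def
  by (cases r) (auto simp: matrix_vector_mult_diff_distrib vector_scalar_commute)

lemma stacked_supp_uminus: "stacked_supp A B (- y) = stacked_supp A B y"
  unfolding stacked_supp_def by (simp add: vec.neg)

lemma is_circuit_uminus: "is_circuit A B (- c) \<longleftrightarrow> is_circuit A B c"
  by (simp add: is_circuit_def stacked_supp_uminus)

lemma matrix_vector_mult_axis_one: "(M *v axis k (1::real)) $ i = M $ i $ k"
  by (simp add: matrix_vector_mult_basis column_def)

lemma nonneg_matrix_vector_mult_pos:
  fixes M :: "real^'n^'m" and c :: "real^'n"
  assumes "\<forall>i k. M $ i $ k \<ge> 0" and "\<forall>k. c $ k \<ge> 0" and "c $ k \<noteq> 0" and "M $ i $ k \<noteq> 0"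
  shows "(M *v c) $ i > 0"
proof -
  have "M $ i $ k * c $ k \<le> (\<Sum>l\<in>UNIV. M $ i $ l * c $ l)"
    by (rule member_le_sum) (use assms in auto)
  also have "\<dots> = (M *v c) $ i"
    by (simp add: matrix_vector_mult_def)
  finally show ?thesis
    using assms by (smt (verit) mult_pos_pos)
qed

lemma stacked_supp_axis_subset:
  fixes A :: "real^'n^'m1" and B :: "real^'n^'m2" and c :: "real^'n"
  assumes A: "\<forall>i k. A $ i $ k \<ge> 0" and B: "\<forall>j k. B $ j $ k \<le> 0"
    and c: "\<forall>k. c $ k \<ge> 0" and ck: "c $ k \<noteq> 0"
  shows "stacked_supp A B (axis k 1) \<subseteq> stacked_supp A B c"
proof
  fix r assume r: "r \<in> stacked_supp A B (axis k 1)"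
  show "r \<in> stacked_supp A B c"
  proof (cases r)
    case (Inl i)
    with r have "A $ i $ k \<noteq> 0"
      by (auto simp: stacked_supp_def matrix_vector_mult_axis_one)
    then have "(A *v c) $ i > 0"
      using nonneg_matrix_vector_mult_pos[OF A c ck] by blast
    with Inl show ?thesis by (auto simp: stacked_supp_def)
  next
    case (Inr j)
    with r have "(- B) $ j $ k \<noteq> 0"
      by (auto simp: stacked_supp_def matrix_vector_mult_axis_one)
    moreover have "\<forall>j k. (- B) $ j $ k \<ge> 0" using B by simp
    ultimately have "((- B) *v c) $ j > 0"
      using nonneg_matrix_vector_mult_pos c ck by blast
    then have "(B *v c) $ j \<noteq> 0"
      by (simp add: matrix_vector_mult_def sum_negf)
    with Inr show ?thesis by (auto simp: stacked_supp_def)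
  qed
qed

lemma stacked_supp_eliminate:
  assumes u: "stacked_supp A B u = T" and v: "stacked_supp A B v = T" and r: "r \<in> T"
  obtains p q where "p \<noteq> 0" "q \<noteq> 0" "stacked_supp A B (q *s u - p *s v) \<subseteq> T - {r}"
proof
  define p where "p = stacked_entry A B u r"
  define q where "q = stacked_entry A B v r"
  show "p \<noteq> 0" "q \<noteq> 0"
    using r u v by (auto simp: p_def q_def mem_stacked_supp_iff)
  show "stacked_supp A B (q *s u - p *s v) \<subseteq> T - {r}"
    using u v by (auto simp: mem_stacked_supp_iff stacked_entry_diff_scale p_def q_def)
qed

lemma bounded_line_imp_zero:
  fixes v :: "'a::real_normed_vector"
  assumes "bounded S" and "\<And>t. x + t *\<^sub>R v \<in> S"
  shows "v = 0"
proof (rule ccontr)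
  assume "v \<noteq> 0"
  obtain M where M: "\<And>y. y \<in> S \<Longrightarrow> norm y \<le> M"
    using assms(1) by (auto simp: bounded_iff)
  define t where "t = (M + norm x + 1) / norm v"
  have "0 \<le> M" using M[OF assms(2)[of 0]] by (meson norm_ge_zero order_trans)
  then have "M + norm x + 1 = norm (t *\<^sub>R v)"
    using \<open>v \<noteq> 0\<close> by (simp add: t_def)
  also have "\<dots> \<le> norm (x + t *\<^sub>R v) + norm x"
    by (metis add_diff_cancel_left' norm_triangle_ineq4 add.commute)
  finally show False using M[OF assms(2)[of t]] by linarith
qed

lemma bounded_polyhedron_stacked_supp_empty:
  fixes A :: "real^'n^'m1" and B :: "real^'n^'m2"
  assumes Q: "Q = {x. (\<forall>i. (A *v x) $ i \<le> b $ i) \<and> (\<forall>j. (B *v x) $ j \<le> d $ j)}"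
    and "bounded Q" and "x \<in> Q" and "stacked_supp A B v = {}"
  shows "v = 0"
proof (rule bounded_line_imp_zero[OF \<open>bounded Q\<close>])
  have "A *v v = 0" "B *v v = 0"
    using assms(4) by (auto simp: stacked_supp_def vec_eq_iff)
  then show "x + t *\<^sub>R v \<in> Q" for t
    using assms(3) unfolding Q
    by (simp add: matrix_vector_right_distrib scalar_mult_eq_scaleR[symmetric] vector_scalar_commute)
qed

lemma nonneg_circuit_single_support:
  fixes A :: "real^'n^'m1" and B :: "real^'n^'m2" and c :: "real^'n"
  assumes A: "\<forall>i k. A $ i $ k \<ge> 0" and B: "\<forall>j k. B $ j $ k \<le> 0"
    and circ: "is_circuit A B c" and c: "\<forall>k. c $ k \<ge> 0"
    and ker: "\<And>v. stacked_supp A B v = {} \<Longrightarrow> v = 0"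
  shows "\<exists>!k. c $ k \<noteq> 0"
proof -
  let ?T = "stacked_supp A B c"
  have minimal: "\<not> (y \<noteq> 0 \<and> stacked_supp A B y \<subset> ?T)" for y
    using circ by (auto simp: is_circuit_def)
  have axis_supp: "stacked_supp A B (axis k 1) = ?T" if "c $ k \<noteq> 0" for k
    using stacked_supp_axis_subset[OF A B c that] minimal[of "axis k 1"]
    by (auto simp: axis_eq_0_iff)
  obtain k where k: "c $ k \<noteq> 0"
    using circ by (metis is_circuit_def vec_eq_iff zero_index)
  have "?T \<noteq> {}"
    using ker[of "axis k 1"] axis_supp[OF k] by (auto simp: axis_eq_0_iff)
  then obtain r where r: "r \<in> ?T" by blast
  have "l = k" if l: "c $ l \<noteq> 0" for l
  proof (rule ccontr)
    assume "l \<noteq> k"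
    obtain p q where "p \<noteq> 0" "q \<noteq> 0"
      and sub: "stacked_supp A B (q *s axis k 1 - p *s axis l 1) \<subseteq> ?T - {r}"
      using stacked_supp_eliminate[OF axis_supp[OF k] axis_supp[OF l] r] .
    have "(q *s axis k 1 - p *s axis l (1::real)) $ k = q"
      using \<open>l \<noteq> k\<close> by (simp add: axis_def)
    with \<open>q \<noteq> 0\<close> have "q *s axis k 1 - p *s axis l (1::real) \<noteq> 0" by (metis zero_index)
    with sub r minimal show False by blast
  qed
  with k show ?thesis by blast
qed

theorem lemma1:
  fixes A :: "real^'n^'m1" and B :: "real^'n^'m2"
    and b :: "real^'m1" and d :: "real^'m2" and c :: "real^'n"
  assumes "Q = {x. (\<forall>i. (A *v x) $ i \<le> b $ i) \<and> (\<forall>j. (B *v x) $ j \<le> d $ j)}"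
    and "polytope Q" and "Q \<noteq> {}"
    and "\<forall>i k. A $ i $ k \<ge> 0"
    and "\<forall>j k. B $ j $ k \<le> 0"
    and "is_circuit A B c"
    and "(\<forall>k. c $ k \<ge> 0) \<or> (\<forall>k. c $ k \<le> 0)"
  shows "\<exists>!k. c $ k \<noteq> 0"
proof -
  obtain x where "x \<in> Q" using assms(3) by blast
  have "bounded Q" using assms(2) by (simp add: polytope_imp_bounded)
  then have ker: "v = 0" if "stacked_supp A B v = {}" for v
    using bounded_polyhedron_stacked_supp_empty[OF assms(1)] \<open>x \<in> Q\<close> that by blast
  show ?thesis
    using assms(7)
  proof
    assume "\<forall>k. c $ k \<ge> 0"
    then show ?thesis
      using nonneg_circuit_single_support[OF assms(4,5,6)] ker by blast
  next
    assume "\<forall>k. c $ k \<le> 0"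
    then have "\<exists>!k. (- c) $ k \<noteq> 0"
      using nonneg_circuit_single_support[OF assms(4,5), of "- c"] assms(6) ker
      by (simp add: is_circuit_uminus)
    then show ?thesis by simp
  qed
qed

end
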